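(* Let $n\ge 1$, $t\ge 0$, $\ell\ge 1$ be integers with $n\ge 3t+1$. The protocol COOL described in the context solves Byzantine agreement on $\ell$-bit messages error-free: in every execution, against every adversary (of unbounded computational power, with no cryptographic assumptions whatsoever) controlling at most $t$ processors, it satisfies termination, consistency and validity. Moreover, COOL uses $O(t)$ rounds and a total of $O(\max\{n\ell,\ nt\log t\})$ communicated bits. (Thus it has resilience $n\ge 3t+1$, round complexity $O(t)$, and communication complexity $O(n\ell)$ whenever $\ell\ge t\log t$.)
   Context: Setting. There are $n$ processors indexed by $[1:n]=\{1,\dots,n\}$; every two are joined by a reliable private channel, communication is synchronous (in rounds), and each recipient knows the sender of every message. At most $t$ processors are dishonest; they are controlled by a Byzantine adversary of unbounded computational power that knows all inputs and may make them deviate arbitrarily (e.g. send different values to different processors, or send nothing; missing values are replaced by a fixed default). The others are honest. Processor $i$ holds an $\ell$-bit initial message $\boldsymbol w_i$. $\phi$ denotes a default value different from every $\ell$-bit message. Logarithms are base 2. Byzantine agreement requirements: termination (every honest processor eventually outputs a message and terminates), consistency (all honest processors output the same message), validity (if all honest processors have the same initial message, they all output it). A protocol is error-free if these hold in every execution. Code. Let $k=\lfloor t/5\rfloor+1$ and $c=\lceil \max\{\ell,(t/5+1)\log(n+1)\}/k\rceil$ (so $n\le 2^c-1$). Every $\ell$-bit message is padded with zeros to $kc$ bits and regarded as a vector in $GF(2^c)^k$. Integers in $[1:n]$ are identified with distinct nonzero elements of $GF(2^c)$ (e.g. via binary representation), and for $i\in[1:n]$ the vector $\boldsymbol h_i\in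 GF(2^c)^k$ has entries $h_{i,j}=\prod_{p\in[1:k],\,p\ne j}\frac{i-p}{j-p}$, $j\in[1:k]$, computed in $GF(2^c)$; so $\boldsymbol h_i^{\mathsf T}\boldsymbol x$ is the value at $i$ of the polynomial of degree $<k$ taking values $x_1,\dots,x_k$ at $1,\dots,k$. Core protocol (run by all $n$ processors; steps of honest processor $i$). Initialization: $\boldsymbol w^{(i)}:=\boldsymbol w_i$ (the "updated message"), $y^{(i)}_j:=\boldsymbol h_j^{\mathsf T}\boldsymbol w_i$ for $j\in[1:n]$, $u_i(i):=1$. Phase 1. (a) Send the pair $(y^{(i)}_j,y^{(i)}_i)$ to each $j\neq i$. (b) For $j\ne i$, set the link indicator $u_i(j):=1$ if the pair received from $j$ equals $(y^{(i)}_i,y^{(i)}_j)$, else $u_i(j):=0$. Set the success indicator $s_i:=1$ if $\sum_{j=1}^n u_i(j)\ge n-t$; otherwise $s_i:=0$ and $\boldsymbol w^{(i)}:=\phi$. (c) Send $s_i$ to all processors; each processor records for every $j$ the indicator received from $j$ (its own for itself) and forms $\mathcal S_1=\{j: s_j=1\}$, $\mathcal S_0=\{j: s_j=0\}$ (views may differ between processors). Phase 2. If $s_i=1$: set $u_i(j):=0$ for all $j\in\mathcal S_0$; if now $\sum_j u_i(j)<n-t$, set $s_i:=0$, $\boldsymbol w^{(i)}:=\phi$ and send $s_i=0$ to all. Every processor overwrites its recorded indicators with newly received ones and recomputes $\mathcal S_0,\mathcal S_1$. Phase 3. Repeat the steps of Phase 2 once more. Then set the vote $v_i:=1$ if the recorded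 indicators satisfy $\sum_{j=1}^n s_j\ge 2t+1$, else $v_i:=0$. All processors run on the votes a deterministic error-free binary Byzantine agreement protocol for $t<n/3$ using $O(nt)$ bits and $O(t)$ rounds (e.g. Berman–Garay–Perry or Coan–Welch), guaranteeing that all honest processors decide, decide equally, and decide the common honest vote if all honest votes agree. If the decision is $0$, processor $i$ sets $\boldsymbol w^{(i)}:=\phi$, outputs $\phi$ and stops. Phase 4 (decision $1$). If $s_i=0$: replace $y^{(i)}_i$ by the most frequent value (fixed tie-breaking) among the first components of the Phase-1 pairs received from processors $j\in\mathcal S_1$; send the new $y^{(i)}_i$ to every $j\in\mathcal S_0\setminus\{i\}$; form $z_1,\dots,z_n$ with $z_i=y^{(i)}_i$, $z_j$ = value received from $j$ in Phase 4 for $j\in\mathcal S_0\setminus\{i\}$, and $z_j$ = second component of the Phase-1 pair from $j$ for $j\in\mathcal S_1$; set $\boldsymbol w^{(i)}$ to a message $\boldsymbol x$ with $\boldsymbol h_j^{\mathsf T}\boldsymbol x=z_j$ for at least $n-t$ indices $j$ (Reed–Solomon decoding correcting up to $t$ errors; $\phi$ if none exists). If $s_i=1$, keep $\boldsymbol w^{(i)}$. Output $\boldsymbol w^{(i)}$ and stop. COOL in general. If $t=\Omega(n)$ (i.e. $n\le Ct$ for a fixed constant $C$), COOL is the core protocol. Otherwise, the processors of $Q=[1:n']$, $n'=3t+1$, run the core protocol among themselves (with $n$ replaced by $n'$ everywhere, in particular in $c$); then each $i\in Q$ sends to every processor outside $Q$ the value $\boldsymbol h_i^{\mathsf T}\boldsymbol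 w^{(i)}$ of its output (a fixed marker if the output is $\phi$), and each processor outside $Q$ outputs the message consistent with the values received from at least $n'-t$ processors of $Q$ (or $\phi$ if at least $n'-t$ markers are received). *)

theory Defs
  imports "HOL-Algebra.Algebra" Complex_Main
begin

definition kval :: "nat \<Rightarrow> nat" where
  "kval t = t div 5 + 1"

definition cval :: "nat \<Rightarrow> nat \<Rightarrow> nat \<Rightarrow> nat" where
  "cval N t l = nat \<lceil>max (real l) ((real t / 5 + 1) * log 2 (real N + 1)) / real (kval t)\<rceil>"

definition pbit :: "bool list \<Rightarrow> nat \<Rightarrow> bool" where
  "pbit m q = (q < length m \<and> m ! q)"

text \<open>Entry j (j in [1:k]) of the vector in GF(2^c)^k associated with the padded
  message m: the j-th block of c bits, read in binary (element of GF(2^c)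
  represented by its binary representation, a natural number below 2^c).\<close>
definition enc :: "nat \<Rightarrow> bool list \<Rightarrow> nat \<Rightarrow> nat" where
  "enc c m j = (\<Sum>b<c. if pbit m ((j - 1) * c + b) then 2 ^ b else 0)"

definition hcoef :: "nat ring \<Rightarrow> nat \<Rightarrow> nat \<Rightarrow> nat \<Rightarrow> nat" where
  "hcoef R k i j = finprod R (\<lambda>p. (i \<ominus>\<^bsub>R\<^esub> p) \<otimes>\<^bsub>R\<^esub> inv\<^bsub>R\<^esub> (j \<ominus>\<^bsub>R\<^esub> p)) ({1..k} - {j})"

definition heval :: "nat ring \<Rightarrow> nat \<Rightarrow> nat \<Rightarrow> (nat \<Rightarrow> nat) \<Rightarrow> nat" where
  "heval R k i x = finsum R (\<lambda>j. hcoef R k i j \<otimes>\<^bsub>R\<^esub> x j) {1..k}"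

definition mostfreq :: "nat set \<Rightarrow> (nat \<Rightarrow> nat) \<Rightarrow> nat" where
  "mostfreq A f = (if A = {} then 0 else
     (LEAST v. v \<in> f ` A \<and> (\<forall>v'\<in>f ` A. card {j\<in>A. f j = v'} \<le> card {j\<in>A. f j = v})))"

definition san :: "nat ring \<Rightarrow> nat \<Rightarrow> nat" where
  "san R v = (if v \<in> carrier R then v else \<zero>\<^bsub>R\<^esub>)"

text \<open>Messages sent by dishonest processors (indexed sender, receiver) in each
  communication step; the adversary of the binary BA sub-protocol is of type 'a.
  Since honest processors are deterministic and the adversary knows all inputs,
  quantifying over all such fixed message assignments covers all adaptive
  strategies.\<close>
record 'a adv =
  a1 :: "nat \<Rightarrow> nat \<Rightarrow> nat \<times> nat"
  b1 :: "nat \<Rightarrow> nat \<Rightarrow> bool"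
  b2 :: "nat \<Rightarrow> nat \<Rightarrow> bool option"       \<comment> \<open>Phase 2 indicators (None = nothing sent)\<close>
  b3 :: "nat \<Rightarrow> nat \<Rightarrow> bool option"
  aBA :: 'a
  a4 :: "nat \<Rightarrow> nat \<Rightarrow> nat"
  a5 :: "nat \<Rightarrow> nat \<Rightarrow> nat option"        \<comment> \<open>final values sent to processors outside Q (None = marker)\<close>

section \<open>Binary Byzantine agreement black box\<close>

text \<open>BA N t D v a = (decisions, rounds, bits sent by honest processors) of the
  binary BA protocol run by processors [1:N] with dishonest set D, votes v and
  adversary behaviour a.\<close>
definition binary_BA ::
  "(nat \<Rightarrow> nat \<Rightarrow> nat set \<Rightarrow> (nat \<Rightarrow> bool) \<Rightarrow> 'a \<Rightarrow> (nat \<Rightarrow> bool) \<times> nat \<times> nat) \<Rightarrow> bool" where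
  "binary_BA BA \<longleftrightarrow> (\<exists>Cb::real. \<forall>N t D v a. 3 * t + 1 \<le> N \<and> D \<subseteq> {1..N} \<and> card D \<le> t \<longrightarrow>
     (case BA N t D v a of (d, r, b) \<Rightarrow>
        (\<forall>i\<in>{1..N} - D. \<forall>j\<in>{1..N} - D. d i = d j) \<and>
        (\<forall>x. (\<forall>i\<in>{1..N} - D. v i = x) \<longrightarrow> (\<forall>i\<in>{1..N} - D. d i = x)) \<and>
        real r \<le> Cb * max 1 (real t) \<and>
        real b \<le> Cb * real N * max 1 (real t)))"

context
  fixes F :: "nat \<Rightarrow> nat ring"
    and BA :: "nat \<Rightarrow> nat \<Rightarrow> nat set \<Rightarrow> (nat \<Rightarrow> bool) \<Rightarrow> 'a \<Rightarrow> (nat \<Rightarrow> bool) \<times> nat \<times> nat"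
    and N t l :: nat
    and w :: "nat \<Rightarrow> bool list"
    and D :: "nat set"
    and A :: "'a adv"
begin

definition "cR = F (cval N t l)"
definition "cPr = {1..N}"

definition cy :: "nat \<Rightarrow> nat \<Rightarrow> nat" where
  "cy i j = heval cR (kval t) j (enc (cval N t l) (w i))"

definition crcv1 :: "nat \<Rightarrow> nat \<Rightarrow> nat \<times> nat" where
  "crcv1 i j = (if j \<in> D then (san cR (fst (a1 A j i)), san cR (snd (a1 A j i)))
               else (cy j i, cy j j))"

definition cu1 :: "nat \<Rightarrow> nat \<Rightarrow> bool" where
  "cu1 i j = (j = i \<or> crcv1 i j = (cy i i, cy i j))"

definition cs1 :: "nat \<Rightarrow> bool" where
  "cs1 i = (N - t \<le> card {j\<in>cPr. cu1 i j})"

definition crec1 :: "nat \<Rightarrow> nat \<Rightarrow> bool" where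
  "crec1 i j = (if j = i then cs1 i else if j \<in> D then b1 A j i else cs1 j)"

definition cu2 :: "nat \<Rightarrow> nat \<Rightarrow> bool" where
  "cu2 i j = (cu1 i j \<and> crec1 i j)"

definition cs2 :: "nat \<Rightarrow> bool" where
  "cs2 i = (cs1 i \<and> N - t \<le> card {j\<in>cPr. cu2 i j})"

definition csnd2 :: "nat \<Rightarrow> bool" where
  "csnd2 i = (cs1 i \<and> \<not> cs2 i)"

definition crec2 :: "nat \<Rightarrow> nat \<Rightarrow> bool" where
  "crec2 i j = (if j = i then cs2 i else
     (case (if j \<in> D then b2 A j i else if csnd2 j then Some False else None) of
        None \<Rightarrow> crec1 i j | Some b \<Rightarrow> b))"

definition cu3 :: "nat \<Rightarrow> nat \<Rightarrow> bool" where
  "cu3 i j = (cu2 i j \<and> crec2 i j)"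

definition cs3 :: "nat \<Rightarrow> bool" where
  "cs3 i = (cs2 i \<and> N - t \<le> card {j\<in>cPr. cu3 i j})"

definition csnd3 :: "nat \<Rightarrow> bool" where
  "csnd3 i = (cs2 i \<and> \<not> cs3 i)"

definition crec3 :: "nat \<Rightarrow> nat \<Rightarrow> bool" where
  "crec3 i j = (if j = i then cs3 i else
     (case (if j \<in> D then b3 A j i else if csnd3 j then Some False else None) of
        None \<Rightarrow> crec2 i j | Some b \<Rightarrow> b))"

definition cvote :: "nat \<Rightarrow> bool" where
  "cvote i = (2 * t + 1 \<le> card {j\<in>cPr. crec3 i j})"

definition "cBA = BA N t D cvote (aBA A)"

definition cdec :: "nat \<Rightarrow> bool" where
  "cdec i = fst cBA i"

definition cnewy :: "nat \<Rightarrow> nat" where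
  "cnewy i = mostfreq {j\<in>cPr. crec3 i j} (\<lambda>j. fst (crcv1 i j))"

definition csnd4 :: "nat \<Rightarrow> nat \<Rightarrow> bool" where
  "csnd4 i j = (cdec i \<and> \<not> cs3 i \<and> j \<noteq> i \<and> \<not> crec3 i j)"

definition crcv4 :: "nat \<Rightarrow> nat \<Rightarrow> nat" where
  "crcv4 i j = (if j \<in> D then san cR (a4 A j i)
                else if csnd4 j i then cnewy j else \<zero>\<^bsub>cR\<^esub>)"

definition cz :: "nat \<Rightarrow> nat \<Rightarrow> nat" where
  "cz i j = (if j = i then cnewy i else if crec3 i j then snd (crcv1 i j) else crcv4 i j)"

definition cdecode :: "(nat \<Rightarrow> nat) \<Rightarrow> bool list option" where
  "cdecode zz = (if \<exists>m. length m = l \<and> N - t \<le> card {j\<in>cPr. heval cR (kval t) j (enc (cval N t l) m) = zz j}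
     then Some (SOME m. length m = l \<and> N - t \<le> card {j\<in>cPr. heval cR (kval t) j (enc (cval N t l) m) = zz j})
     else None)"

text \<open>output of honest processor i (None = phi)\<close>
definition core_out :: "nat \<Rightarrow> bool list option" where
  "core_out i = (if \<not> cdec i then None else if cs3 i then Some (w i) else cdecode (cz i))"

definition core_rounds :: nat where
  "core_rounds = 5 + fst (snd cBA)"

definition core_bits :: nat where
  "core_bits = (\<Sum>i\<in>cPr - D.
       2 * cval N t l * (N - 1) + (N - 1)
     + (if csnd2 i then N - 1 else 0) + (if csnd3 i then N - 1 else 0)
     + cval N t l * card {j\<in>cPr. csnd4 i j})
     + snd (snd cBA)"

end

definition cool_out ::
  "(nat \<Rightarrow> nat ring) \<Rightarrow> real \<Rightarrow> (nat \<Rightarrow> nat \<Rightarrow> nat set \<Rightarrow> (nat \<Rightarrow> bool) \<Rightarrow> 'a \<Rightarrow> (nat \<Rightarrow> bool) \<times> nat \<times> nat)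
   \<Rightarrow> nat \<Rightarrow> nat \<Rightarrow> nat \<Rightarrow> (nat \<Rightarrow> bool list) \<Rightarrow> nat set \<Rightarrow> 'a adv \<Rightarrow> nat \<Rightarrow> bool list option" where
  "cool_out F C0 BA n t l w D A i =
    (if real n \<le> C0 * real t then core_out F BA n t l w D A i
     else
       (let n' = 3 * t + 1; R' = F (cval n' t l); D' = D \<inter> {1..n'} in
        if i \<le> n' then core_out F BA n' t l w D' A i
        else
          (let r = (\<lambda>j. if j \<in> D then map_option (san R') (a5 A j i)
                        else map_option (\<lambda>m. heval R' (kval t) j (enc (cval n' t l) m))
                               (core_out F BA n' t l w D' A j))
           in if \<exists>m. length m = l \<and> n' - t \<le> card {j\<in>{1..n'}. r j = Some (heval R' (kval t) j (enc (cval n' t l) m))}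
              then Some (SOME m. length m = l \<and> n' - t \<le> card {j\<in>{1..n'}. r j = Some (heval R' (kval t) j (enc (cval n' t l) m))})
              else None)))"

definition cool_rounds ::
  "(nat \<Rightarrow> nat ring) \<Rightarrow> real \<Rightarrow> (nat \<Rightarrow> nat \<Rightarrow> nat set \<Rightarrow> (nat \<Rightarrow> bool) \<Rightarrow> 'a \<Rightarrow> (nat \<Rightarrow> bool) \<times> nat \<times> nat)
   \<Rightarrow> nat \<Rightarrow> nat \<Rightarrow> nat \<Rightarrow> (nat \<Rightarrow> bool list) \<Rightarrow> nat set \<Rightarrow> 'a adv \<Rightarrow> nat" where
  "cool_rounds F C0 BA n t l w D A =
    (if real n \<le> C0 * real t then core_rounds F BA n t l w D A
     else core_rounds F BA (3 * t + 1) t l w (D \<inter> {1..3 * t + 1}) A + 1)"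

definition cool_bits ::
  "(nat \<Rightarrow> nat ring) \<Rightarrow> real \<Rightarrow> (nat \<Rightarrow> nat \<Rightarrow> nat set \<Rightarrow> (nat \<Rightarrow> bool) \<Rightarrow> 'a \<Rightarrow> (nat \<Rightarrow> bool) \<times> nat \<times> nat)
   \<Rightarrow> nat \<Rightarrow> nat \<Rightarrow> nat \<Rightarrow> (nat \<Rightarrow> bool list) \<Rightarrow> nat set \<Rightarrow> 'a adv \<Rightarrow> nat" where
  "cool_bits F C0 BA n t l w D A =
    (if real n \<le> C0 * real t then core_bits F BA n t l w D A
     else (let n' = 3 * t + 1 in
       core_bits F BA n' t l w (D \<inter> {1..n'}) A
       + (\<Sum>j\<in>{1..n'} - D. (cval n' t l + 1) * (n - n'))))"

end

theory Submission
  imports Defs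
begin

text \<open>The Reed--Solomon code with \<open>k = \<lfloor>t/5\<rfloor> + 1\<close> is MDS: two distinct messages have fewer
  than \<open>k\<close> equal symbols. A processor keeps success indicator 1 only if \<open>N - t\<close> processors,
  hence a quorum of \<open>N - t - |D|\<close> honest ones, confirmed its symbols. Counting the honest
  positions consistent with each message shows that the honest processors still successful after
  Phase 1 hold at most two messages, and those still successful after Phase 3 all hold the same
  message, since two distinct such messages would need disjoint quorums of honest supporters.
  If the binary agreement decides 1, some honest processor voted 1, so more than \<open>t\<close> honest
  processors are still successful; their common message wins the majority vote of Phase 4 at
  every honest position, and decoding recovers it at every honest processor. Validity holds
  because equal messages confirm every honest link. The cost is dominated by \<open>N\<^sup>2\<close> symbols of
  \<open>c = O(\<ell>/t + log N)\<close> bits each plus the binary agreement; when \<open>t = o(n)\<close> only \<open>3t + 1\<close>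
  processors run the core protocol and then send one symbol to every other processor.\<close>

section \<open>Polynomials over a field\<close>

lemma card_set_mset_le_size: "card (set_mset M) \<le> size M"
  by (metis size_mset_mono mset_set_set_mset_msubset size_mset_set)

context domain
begin

lemma degree_mult_le:
  assumes "p \<in> carrier (poly_ring R)" "q \<in> carrier (poly_ring R)"
  shows "degree (p \<otimes>\<^bsub>poly_ring R\<^esub> q) \<le> degree p + degree q"
  using poly_mult_degree_eq[OF carrier_is_subring, of p q] assms
  by (simp add: univ_poly_mult univ_poly_carrier)

lemma degree_add_le: "degree (p \<oplus>\<^bsub>poly_ring R\<^esub> q) \<le> max (degree p) (degree q)"
  using poly_add_degree[of p q] by (simp add: univ_poly_add)

lemma degree_minus_le:
  assumes "q \<in> carrier (poly_ring R)"
  shows "degree (p \<ominus>\<^bsub>poly_ring R\<^esub> q) \<le> max (degree p) (degree q)"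
  using degree_add_le[of p "\<ominus>\<^bsub>poly_ring R\<^esub> q"] univ_poly_a_inv_degree[OF carrier_is_subring assms]
  by (simp add: a_minus_def)

interpretation P: domain "poly_ring R"
  using univ_poly_is_domain[OF carrier_is_subring] .

lemma poly_of_const_closed: "c \<in> carrier R \<Longrightarrow> poly_of_const c \<in> carrier (poly_ring R)"
  unfolding poly_of_const_def univ_poly_carrier[symmetric] polynomial_def by simp

lemma degree_poly_of_const: "degree (poly_of_const c) = 0"
  unfolding poly_of_const_def by simp

lemma eval_poly_of_const: "c \<in> carrier R \<Longrightarrow> eval (poly_of_const c) a = c"
  unfolding poly_of_const_def by simp

lemma linear_factor_closed:
  assumes "q \<in> carrier R" "c \<in> carrier R"
  shows "(X \<ominus>\<^bsub>poly_ring R\<^esub> poly_of_const q) \<otimes>\<^bsub>poly_ring R\<^esub> poly_of_const c \<in> carrier (poly_ring R)"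
  using assms
  by (intro P.m_closed P.minus_closed var_closed(1) carrier_is_subring poly_of_const_closed)

lemma degree_linear_factor:
  assumes q: "q \<in> carrier R" and c: "c \<in> carrier R"
  shows "degree ((X \<ominus>\<^bsub>poly_ring R\<^esub> poly_of_const q) \<otimes>\<^bsub>poly_ring R\<^esub> poly_of_const c) \<le> 1"
proof -
  have X: "X \<in> carrier (poly_ring R)" by (intro var_closed(1) carrier_is_subring)
  have "degree (X \<ominus>\<^bsub>poly_ring R\<^esub> poly_of_const q) \<le> max (degree X) (degree (poly_of_const q))"
    using q by (intro degree_minus_le poly_of_const_closed)
  also have "\<dots> = 1" using degree_poly_of_const[of q] by (simp add: var_def)
  finally have "degree (X \<ominus>\<^bsub>poly_ring R\<^esub> poly_of_const q) \<le> 1" .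
  moreover have "degree ((X \<ominus>\<^bsub>poly_ring R\<^esub> poly_of_const q) \<otimes>\<^bsub>poly_ring R\<^esub> poly_of_const c)
      \<le> degree (X \<ominus>\<^bsub>poly_ring R\<^esub> poly_of_const q) + degree (poly_of_const c)"
    using X q c by (intro degree_mult_le P.minus_closed poly_of_const_closed)
  ultimately show ?thesis using degree_poly_of_const[of c] by simp
qed

lemma eval_linear_factor:
  assumes q: "q \<in> carrier R" and c: "c \<in> carrier R" and a: "a \<in> carrier R"
  shows "eval ((X \<ominus>\<^bsub>poly_ring R\<^esub> poly_of_const q) \<otimes>\<^bsub>poly_ring R\<^esub> poly_of_const c) a = (a \<ominus> q) \<otimes> c"
proof -
  interpret ev: ring_hom_cring "poly_ring R" R "\<lambda>p. eval p a"
    using eval_cring_hom[OF carrier_is_subring a] .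
  have X: "X \<in> carrier (poly_ring R)" by (intro var_closed(1) carrier_is_subring)
  show ?thesis
    using X q c a
    by (simp add: ev.hom_mult ev.hom_sub poly_of_const_closed eval_var eval_poly_of_const)
qed

lemma degree_finprod_le:
  assumes "finite A" "f \<in> A \<rightarrow> carrier (poly_ring R)"
  shows "degree (finprod (poly_ring R) f A) \<le> (\<Sum>a\<in>A. degree (f a))"
  using assms
proof (induction A rule: finite_induct)
  case empty
  then show ?case by (simp add: univ_poly_one)
next
  case (insert a A)
  have "degree (finprod (poly_ring R) f (insert a A))
      = degree (f a \<otimes>\<^bsub>poly_ring R\<^esub> finprod (poly_ring R) f A)"
    using insert by (simp add: P.finprod_insert)
  also have "\<dots> \<le> degree (f a) + degree (finprod (poly_ring R) f A)"
    using insert by (intro degree_mult_le) (auto intro: P.finprod_closed)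
  finally show ?case using insert by simp
qed

lemma degree_finsum_le:
  assumes "finite A" "f \<in> A \<rightarrow> carrier (poly_ring R)" "\<And>a. a \<in> A \<Longrightarrow> degree (f a) \<le> d"
  shows "degree (finsum (poly_ring R) f A) \<le> d"
  using assms
proof (induction A rule: finite_induct)
  case empty
  then show ?case by (simp add: univ_poly_zero)
next
  case (insert a A)
  have "finsum (poly_ring R) f (insert a A) = f a \<oplus>\<^bsub>poly_ring R\<^esub> finsum (poly_ring R) f A"
    using insert by (simp add: P.finsum_insert)
  moreover have "degree (f a) \<le> d" "degree (finsum (poly_ring R) f A) \<le> d"
    using insert by auto
  ultimately show ?case using degree_add_le[of "f a" "finsum (poly_ring R) f A"] by simp
qed

end

context field
begin

interpretation P: domain "poly_ring R"
  using univ_poly_is_domain[OF carrier_is_subring] .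

lemma inv_diff_closed:
  assumes "a \<in> carrier R" "b \<in> carrier R" "a \<noteq> b"
  shows "inv (a \<ominus> b) \<in> carrier R"
  using assms by (auto simp: field_Units r_right_minus_eq)

lemma r_inv_diff:
  assumes "a \<in> carrier R" "b \<in> carrier R" "a \<noteq> b"
  shows "(a \<ominus> b) \<otimes> inv (a \<ominus> b) = \<one>"
  using assms by (auto simp: field_Units r_right_minus_eq intro: Units_r_inv)

lemma card_roots_le_degree:
  assumes p: "p \<in> carrier (poly_ring R)" "p \<noteq> []"
    and S: "S \<subseteq> carrier R" "\<And>a. a \<in> S \<Longrightarrow> eval p a = \<zero>"
  shows "card S \<le> degree p"
proof -
  have "S \<subseteq> set_mset (roots p)"
    using S p by (auto simp: roots_mem_iff_is_root is_root_def)
  then have "card S \<le> card (set_mset (roots p))" by (intro card_mono) auto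
  also have "\<dots> \<le> size (roots p)" by (rule card_set_mset_le_size)
  also have "\<dots> \<le> degree p" using p(1) by (rule size_roots_le_degree)
  finally show ?thesis .
qed

lemma poly_eq_if_eval_agree:
  assumes p: "p \<in> carrier (poly_ring R)" and q: "q \<in> carrier (poly_ring R)"
    and S: "S \<subseteq> carrier R" "degree p < card S" "degree q < card S"
    and agree: "\<And>a. a \<in> S \<Longrightarrow> eval p a = eval q a"
  shows "p = q"
proof (rule ccontr)
  assume "p \<noteq> q"
  then have ne: "p \<ominus>\<^bsub>poly_ring R\<^esub> q \<noteq> []"
    using P.r_right_minus_eq[OF p q] by (simp add: univ_poly_zero)
  have "eval (p \<ominus>\<^bsub>poly_ring R\<^esub> q) a = \<zero>" if "a \<in> S" for a
  proof -
    interpret ev: ring_hom_cring "poly_ring R" R "\<lambda>p. eval p a"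
      using eval_cring_hom[OF carrier_is_subring] S that by auto
    show ?thesis using agree[OF that] p q by (simp add: ev.hom_sub ev.hom_closed)
  qed
  then have "card S \<le> degree (p \<ominus>\<^bsub>poly_ring R\<^esub> q)"
    using ne p q S(1) by (intro card_roots_le_degree) auto
  also have "\<dots> \<le> max (degree p) (degree q)" using q by (rule degree_minus_le)
  finally show False using S by linarith
qed

end


section \<open>Lagrange interpolation and the MDS property\<close>

definition lagrange_basis :: "nat ring \<Rightarrow> nat \<Rightarrow> nat \<Rightarrow> nat list" where
  "lagrange_basis R k j = finprod (poly_ring R)
     (\<lambda>p. (X\<^bsub>R\<^esub> \<ominus>\<^bsub>poly_ring R\<^esub> ring.poly_of_const R p) \<otimes>\<^bsub>poly_ring R\<^esub>
          ring.poly_of_const R (inv\<^bsub>R\<^esub> (j \<ominus>\<^bsub>R\<^esub> p))) ({1..k} - {j})"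

definition interpolation_poly :: "nat ring \<Rightarrow> nat \<Rightarrow> (nat \<Rightarrow> nat) \<Rightarrow> nat list" where
  "interpolation_poly R k x = finsum (poly_ring R)
     (\<lambda>j. lagrange_basis R k j \<otimes>\<^bsub>poly_ring R\<^esub> ring.poly_of_const R (x j)) {1..k}"

context
  fixes R :: "nat ring" (structure) and k :: nat
  assumes field: "field R" and nodes: "{1..k} \<subseteq> carrier R"
begin

interpretation field R by (rule field)
interpretation P: domain "poly_ring R"
  using univ_poly_is_domain[OF carrier_is_subring] .

lemma node_closed [simp]: "1 \<le> j \<Longrightarrow> j \<le> k \<Longrightarrow> j \<in> carrier R"
  using nodes by auto

lemma hcoef_closed:
  assumes "a \<in> carrier R" "j \<in> {1..k}"
  shows "hcoef R k a j \<in> carrier R"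
  unfolding hcoef_def using assms
  by (intro finprod_closed Pi_I m_closed minus_closed inv_diff_closed) auto

lemma hcoef_node:
  assumes i: "i \<in> {1..k}" and j: "j \<in> {1..k}"
  shows "hcoef R k i j = (if i = j then \<one> else \<zero>)"
proof (cases "i = j")
  case True
  have "hcoef R k j j = finprod R (\<lambda>p. \<one>) ({1..k} - {j})"
    unfolding hcoef_def using j by (intro finprod_cong') (auto intro: r_inv_diff inv_diff_closed)
  then show ?thesis using True by simp
next
  case False
  let ?f = "\<lambda>p. (i \<ominus> p) \<otimes> inv (j \<ominus> p)"
  have f: "?f \<in> {1..k} - {j} \<rightarrow> carrier R"
    using i j by (intro Pi_I m_closed minus_closed inv_diff_closed) auto
  have "{1..k} - {j} = insert i ({1..k} - {j, i})" using i False by auto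
  then have "hcoef R k i j = ?f i \<otimes> finprod R ?f ({1..k} - {j, i})"
    unfolding hcoef_def using f by (simp add: finprod_insert)
  also have "?f i = \<zero>"
    using i j False nodes inv_diff_closed[of j i] by (auto simp: a_minus_def r_neg)
  moreover have "finprod R ?f ({1..k} - {j, i}) \<in> carrier R"
    using f by (intro finprod_closed) auto
  ultimately show ?thesis using False by simp
qed

lemma heval_node:
  assumes x: "x \<in> {1..k} \<rightarrow> carrier R" and j: "j \<in> {1..k}"
  shows "heval R k j x = x j"
proof -
  have "heval R k j x = finsum R (\<lambda>j'. if j = j' then x j' else \<zero>) {1..k}"
    unfolding heval_def using x j by (intro finsum_cong') (auto simp: hcoef_node Pi_iff)
  also have "\<dots> = x j" using x j by (intro finsum_singleton) auto
  finally show ?thesis .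
qed

lemma lagrange_basis_closed:
  assumes "j \<in> {1..k}"
  shows "lagrange_basis R k j \<in> carrier (poly_ring R)"
  unfolding lagrange_basis_def using assms
  by (intro P.finprod_closed Pi_I linear_factor_closed inv_diff_closed) auto

lemma degree_lagrange_basis:
  assumes "j \<in> {1..k}"
  shows "degree (lagrange_basis R k j) \<le> k - 1"
proof -
  have "degree (lagrange_basis R k j) \<le> (\<Sum>p\<in>{1..k} - {j}. 1)"
    unfolding lagrange_basis_def using assms
    by (intro order_trans[OF degree_finprod_le] sum_mono Pi_I linear_factor_closed
        degree_linear_factor inv_diff_closed) auto
  then show ?thesis using assms by simp
qed

lemma eval_lagrange_basis:
  assumes j: "j \<in> {1..k}" and a: "a \<in> carrier R"
  shows "eval (lagrange_basis R k j) a = hcoef R k a j"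
proof -
  interpret ev: ring_hom_cring "poly_ring R" R "\<lambda>p. eval p a"
    using eval_cring_hom[OF carrier_is_subring a] .
  have "eval (lagrange_basis R k j) a
      = finprod R (\<lambda>p. eval ((X \<ominus>\<^bsub>poly_ring R\<^esub> poly_of_const p) \<otimes>\<^bsub>poly_ring R\<^esub>
          poly_of_const (inv (j \<ominus> p))) a) ({1..k} - {j})"
    unfolding lagrange_basis_def using j
    by (subst ev.hom_finprod)
      (auto intro!: Pi_I linear_factor_closed inv_diff_closed simp: comp_def)
  also have "\<dots> = hcoef R k a j"
    unfolding hcoef_def using j a
    by (intro finprod_cong' Pi_I) (auto simp: eval_linear_factor inv_diff_closed)
  finally show ?thesis .
qed

lemma interpolation_poly_closed:
  assumes "x \<in> {1..k} \<rightarrow> carrier R"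
  shows "interpolation_poly R k x \<in> carrier (poly_ring R)"
  unfolding interpolation_poly_def using assms
  by (intro P.finsum_closed Pi_I P.m_closed lagrange_basis_closed poly_of_const_closed) auto

lemma degree_interpolation_poly:
  assumes x: "x \<in> {1..k} \<rightarrow> carrier R"
  shows "degree (interpolation_poly R k x) \<le> k - 1"
  unfolding interpolation_poly_def
proof (rule degree_finsum_le)
  fix j assume j: "j \<in> {1..k}"
  have "degree (lagrange_basis R k j \<otimes>\<^bsub>poly_ring R\<^esub> poly_of_const (x j))
      \<le> degree (lagrange_basis R k j) + degree (poly_of_const (x j))"
    using x j by (intro degree_mult_le lagrange_basis_closed poly_of_const_closed) auto
  then show "degree (lagrange_basis R k j \<otimes>\<^bsub>poly_ring R\<^esub> poly_of_const (x j)) \<le> k - 1"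
    using degree_lagrange_basis[OF j] degree_poly_of_const[of "x j"] by simp
qed (use x in \<open>auto intro!: P.m_closed lagrange_basis_closed poly_of_const_closed\<close>)

lemma eval_interpolation_poly:
  assumes x: "x \<in> {1..k} \<rightarrow> carrier R" and a: "a \<in> carrier R"
  shows "eval (interpolation_poly R k x) a = heval R k a x"
proof -
  interpret ev: ring_hom_cring "poly_ring R" R "\<lambda>p. eval p a"
    using eval_cring_hom[OF carrier_is_subring a] .
  have "eval (interpolation_poly R k x) a
      = finsum R (\<lambda>j. eval (lagrange_basis R k j \<otimes>\<^bsub>poly_ring R\<^esub> poly_of_const (x j)) a) {1..k}"
    unfolding interpolation_poly_def using x
    by (subst ev.hom_finsum)
      (auto intro!: P.m_closed lagrange_basis_closed poly_of_const_closed simp: comp_def)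
  also have "\<dots> = heval R k a x"
    unfolding heval_def using x a
    by (intro finsum_cong' Pi_I m_closed hcoef_closed)
      (auto simp: Pi_iff ev.hom_mult lagrange_basis_closed poly_of_const_closed eval_lagrange_basis
        eval_poly_of_const)
  finally show ?thesis .
qed

lemma heval_agree_imp_eq:
  assumes x: "x \<in> {1..k} \<rightarrow> carrier R" and x': "x' \<in> {1..k} \<rightarrow> carrier R"
    and S: "S \<subseteq> carrier R" "k \<le> card S"
    and agree: "\<And>a. a \<in> S \<Longrightarrow> heval R k a x = heval R k a x'"
    and j: "j \<in> {1..k}"
  shows "x j = x' j"
proof -
  have "degree (interpolation_poly R k x) < card S" "degree (interpolation_poly R k x') < card S"
    using degree_interpolation_poly[OF x] degree_interpolation_poly[OF x'] j S(2) by auto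
  then have "interpolation_poly R k x = interpolation_poly R k x'"
    using S(1) agree
    by (intro poly_eq_if_eval_agree[OF interpolation_poly_closed[OF x]
          interpolation_poly_closed[OF x']])
      (auto simp: eval_interpolation_poly[OF x] eval_interpolation_poly[OF x'] subsetD)
  then have "heval R k j x = heval R k j x'"
    using j nodes by (metis eval_interpolation_poly[OF x] eval_interpolation_poly[OF x'] subsetD)
  then show ?thesis using x x' j by (simp add: heval_node)
qed

end

section \<open>Messages as vectors over \<open>GF(2\<^sup>c)\<close>\<close>

lemma enc_eq_horner_sum:
  "enc c m j = horner_sum of_bool 2 (map (\<lambda>b. pbit m ((j - 1) * c + b)) [0..<c])"
  unfolding enc_def horner_sum_eq_sum by (intro sum.cong) auto

lemma enc_less: "enc c m j < 2 ^ c"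
  using horner_sum_of_bool_2_less[of "map (\<lambda>b. pbit m ((j - 1) * c + b)) [0..<c]"]
  by (simp add: enc_eq_horner_sum)

lemma bit_enc: "bit (enc c m j) b \<longleftrightarrow> b < c \<and> pbit m ((j - 1) * c + b)"
  by (auto simp: enc_eq_horner_sum bit_horner_sum_bit_iff)

lemma enc_inj:
  assumes len: "length m = length m'" "length m \<le> k * c"
    and eq: "\<And>j. j \<in> {1..k} \<Longrightarrow> enc c m j = enc c m' j"
  shows "m = m'"
proof (rule nth_equalityI)
  show "length m = length m'" by (fact len(1))
  fix q assume q: "q < length m"
  then have "q < k * c" using len(2) by simp
  then have "q div c < k" "0 < c" by (auto simp: less_mult_imp_div_less intro: Nat.gr0I)
  then have "bit (enc c m (q div c + 1)) (q mod c) = bit (enc c m' (q div c + 1)) (q mod c)"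
    using eq by simp
  then have "pbit m q = pbit m' q" using \<open>0 < c\<close> by (simp add: bit_enc)
  then show "m ! q = m' ! q" using q len(1) by (simp add: pbit_def)
qed

lemma kval_ge_1: "1 \<le> kval t"
  by (simp add: kval_def)

lemma kval_bounds: "real t / 5 \<le> real (kval t)" "real (kval t) \<le> real t / 5 + 1"
  unfolding kval_def by linarith+

lemma cval_ge:
  "max (real l) ((real t / 5 + 1) * log 2 (real N + 1)) / real (kval t) \<le> real (cval N t l)"
  unfolding cval_def using kval_ge_1[of t] by (simp add: le_max_iff_disj)

lemma cval_le:
  "real (cval N t l) \<le> real l / real (kval t) + 2 * log 2 (real N + 1) + 1"
proof -
  let ?L = "log 2 (real N + 1)" and ?k = "real (kval t)"
  have k: "1 \<le> ?k" using kval_ge_1[of t] by simp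
  have "real (cval N t l) \<le> max (real l) ((real t / 5 + 1) * ?L) / ?k + 1"
    unfolding cval_def using k by (simp add: le_max_iff_disj)
  also have "\<dots> \<le> (real l + 2 * ?k * ?L) / ?k + 1"
  proof -
    have "real t / 5 + 1 \<le> 2 * ?k" using kval_bounds(1)[of t] k by linarith
    then have "(real t / 5 + 1) * ?L \<le> 2 * ?k * ?L" by (simp add: mult_right_mono)
    then show ?thesis using k by (intro add_right_mono divide_right_mono) auto
  qed
  also have "\<dots> = real l / ?k + 2 * ?L + 1" using k by (simp add: field_simps)
  finally show ?thesis .
qed

lemma message_fits_code: "l \<le> kval t * cval N t l"
proof -
  have "real l / real (kval t) \<le> real (cval N t l)"
    using cval_ge[of l t N] by (smt (verit) divide_right_mono kval_ge_1 of_nat_0_le_iff)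
  then have "real l \<le> real (kval t) * real (cval N t l)"
    using kval_ge_1[of t] by (simp add: field_simps)
  then show ?thesis by (simp flip: of_nat_mult)
qed

lemma cval_ge_1: "1 \<le> l \<Longrightarrow> 1 \<le> cval N t l"
  using message_fits_code[of l t N] by (cases "cval N t l") auto

lemma positions_fit_field: "N < 2 ^ cval N t l"
proof -
  have "log 2 (real N + 1) \<le> real (cval N t l)"
  proof -
    have "real (kval t) * log 2 (real N + 1) \<le> (real t / 5 + 1) * log 2 (real N + 1)"
      using kval_bounds(2)[of t] by (simp add: mult_right_mono)
    then have "log 2 (real N + 1) \<le> (real t / 5 + 1) * log 2 (real N + 1) / real (kval t)"
      using kval_ge_1[of t] by (simp add: field_simps)
    also have "\<dots> \<le> real (cval N t l)"
      using cval_ge[of l t N] by (smt (verit) divide_right_mono kval_ge_1 of_nat_0_le_iff)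
    finally show ?thesis .
  qed
  then have "real N + 1 \<le> 2 powr real (cval N t l)"
    by (simp add: log_le_iff)
  then have "real (N + 1) \<le> real (2 ^ cval N t l)" by (simp add: powr_realpow)
  then show ?thesis by linarith
qed

lemma log_size_le:
  assumes K: "1 \<le> K" and N: "real N \<le> K * max 1 (real t)"
  shows "log 2 (real N + 1) \<le> (log 2 (K + 1) + 1) * max 1 (log 2 (real t))"
proof -
  have "real N + 1 \<le> (K + 1) * max 1 (real t)" using N by (simp add: distrib_right)
  then have "log 2 (real N + 1) \<le> log 2 ((K + 1) * max 1 (real t))" by simp
  also have "\<dots> = log 2 (K + 1) + log 2 (max 1 (real t))" using K by (simp add: log_mult)
  also have "log 2 (max 1 (real t)) \<le> max 1 (log 2 (real t))"
    by (cases "1 \<le> real t") (auto simp: max_def)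
  also have "log 2 (K + 1) \<le> log 2 (K + 1) * max 1 (log 2 (real t))"
    using K by (simp add: mult_le_cancel_left1)
  finally show ?thesis by (simp add: algebra_simps)
qed

lemma size_times_cval_le:
  assumes K: "1 \<le> K" and N: "real N \<le> K * max 1 (real t)"
  shows "real N * (real (cval N t l) + 1)
    \<le> K * (2 * log 2 (K + 1) + 5) * (real l + max 1 (real t) * max 1 (log 2 (real t)))"
proof -
  let ?T = "max 1 (real t)" and ?\<Lambda> = "max 1 (log 2 (real t))" and ?k = "real (kval t)"
  let ?M = "log 2 (K + 1) + 1"
  have k: "1 \<le> ?k" using kval_ge_1[of t] by simp
  have M: "0 \<le> ?M" using K by simp
  have N_div_k: "real N / ?k \<le> 5 * K"
  proof -
    have "?T \<le> 5 * ?k" using kval_bounds(1)[of t] k by linarith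
    then have "K * ?T \<le> K * (5 * ?k)" using K by (intro mult_left_mono) auto
    then have "real N \<le> 5 * K * ?k" using N by simp
    then show ?thesis using k by (simp add: divide_le_eq)
  qed
  have N_log: "real N * log 2 (real N + 1) \<le> K * ?T * (?M * ?\<Lambda>)"
    using N log_size_le[OF K N] by (intro mult_mono) auto
  have "?T \<le> ?T * ?\<Lambda>" by (simp add: mult_le_cancel_left1)
  then have N_le: "real N \<le> K * (?T * ?\<Lambda>)" using N K by (smt (verit) mult_left_mono)
  have "real N * (real (cval N t l) + 1)
      \<le> real N * (real l / ?k + 2 * log 2 (real N + 1) + 2)"
    using cval_le[of N t l] by (intro mult_left_mono) auto
  also have "\<dots> = real N / ?k * real l + 2 * (real N * log 2 (real N + 1)) + 2 * real N"
    by (simp add: algebra_simps)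
  also have "\<dots> \<le> 5 * K * real l + 2 * (K * ?T * (?M * ?\<Lambda>)) + 2 * (K * (?T * ?\<Lambda>))"
    using N_div_k N_log N_le by (intro add_mono mult_right_mono mult_left_mono) auto
  also have "\<dots> \<le> K * (2 * log 2 (K + 1) + 5) * (real l + ?T * ?\<Lambda>)"
    using K M by (simp add: algebra_simps)
  finally show ?thesis .
qed

lemma size_log_le_max:
  assumes "1 \<le> l"
  shows "real n * (real l + max 1 (real t) * max 1 (log 2 (real t)))
    \<le> 2 * max (real n * real l) (real n * real t * log 2 (real t))"
proof -
  have "real n * (max 1 (real t) * max 1 (log 2 (real t)))
      \<le> max (real n * real l) (real n * real t * log 2 (real t))"
  proof (cases "2 \<le> t")
    case True
    then have "1 \<le> log 2 (real t)" by simp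
    then show ?thesis using True by (simp add: max_def)
  next
    case False
    then have "t = 0 \<or> t = 1" by auto
    then have "max 1 (log 2 (real t)) = 1" "max 1 (real t) = 1" by (auto simp: log_def)
    then have "real n * (max 1 (real t) * max 1 (log 2 (real t))) \<le> real n * real l"
      using assms by (simp add: mult_le_cancel_left1)
    then show ?thesis by (simp add: le_max_iff_disj)
  qed
  then show ?thesis by (simp add: distrib_left)
qed

lemma mostfreq_eq_majority:
  assumes fin: "finite A" and major: "card {j\<in>A. f j \<noteq> v} < card {j\<in>A. f j = v}"
  shows "mostfreq A f = v"
proof -
  let ?cnt = "\<lambda>u. card {j\<in>A. f j = u}"
  let ?P = "\<lambda>u. u \<in> f ` A \<and> (\<forall>u'\<in>f ` A. ?cnt u' \<le> ?cnt u)"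
  have other: "?cnt u < ?cnt v" if "u \<noteq> v" for u
  proof -
    have "?cnt u \<le> card {j\<in>A. f j \<noteq> v}" using fin that by (intro card_mono) auto
    then show ?thesis using major by linarith
  qed
  have "{j\<in>A. f j = v} \<noteq> {}" using major by (intro notI) simp
  then have v: "v \<in> f ` A" and ne: "A \<noteq> {}" by blast+
  have "?cnt u \<le> ?cnt v" for u
    using other[of u] by (cases "u = v") auto
  then have Pv: "?P v" using v by blast
  have uniq: "u = v" if "?P u" for u
  proof (rule ccontr)
    assume "u \<noteq> v"
    then have "?cnt u < ?cnt v" by (rule other)
    moreover have "?cnt v \<le> ?cnt u" using that v by blast
    ultimately show False by linarith
  qed
  have "(LEAST u. ?P u) = v"
  proof (rule Least_equality)
    show "?P v" by (fact Pv)
    show "v \<le> u" if "?P u" for u using uniq[OF that] by simp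
  qed
  then show ?thesis unfolding mostfreq_def using ne by simp
qed

lemma card_add3_le:
  assumes "finite A" "finite B" "finite C"
  shows "card A + card B + card C
    \<le> card (A \<union> B \<union> C) + card (A \<inter> B) + card (A \<inter> C) + card (B \<inter> C)"
proof -
  have "card ((A \<union> B) \<inter> C) \<le> card (A \<inter> C) + card (B \<inter> C)"
    by (metis Int_Un_distrib2 card_Un_le)
  moreover have "card A + card B = card (A \<union> B) + card (A \<inter> B)"
    using assms by (intro card_Un_Int) auto
  moreover have "card (A \<union> B) + card C = card (A \<union> B \<union> C) + card ((A \<union> B) \<inter> C)"
    using assms by (intro card_Un_Int) auto
  ultimately show ?thesis by linarith
qed

definition binary_BA_run_ok ::
  "(nat \<Rightarrow> nat \<Rightarrow> nat set \<Rightarrow> (nat \<Rightarrow> bool) \<Rightarrow> 'a \<Rightarrow> (nat \<Rightarrow> bool) \<times> nat \<times> nat)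
    \<Rightarrow> real \<Rightarrow> nat \<Rightarrow> nat \<Rightarrow> nat set \<Rightarrow> (nat \<Rightarrow> bool) \<Rightarrow> 'a \<Rightarrow> bool" where
  "binary_BA_run_ok BA Cb N t D v a \<longleftrightarrow>
     (\<forall>i\<in>{1..N} - D. \<forall>j\<in>{1..N} - D. fst (BA N t D v a) i = fst (BA N t D v a) j) \<and>
     (\<forall>x. (\<forall>i\<in>{1..N} - D. v i = x) \<longrightarrow> (\<forall>i\<in>{1..N} - D. fst (BA N t D v a) i = x)) \<and>
     real (fst (snd (BA N t D v a))) \<le> Cb * max 1 (real t) \<and>
     real (snd (snd (BA N t D v a))) \<le> Cb * real N * max 1 (real t)"

lemma binary_BA_iff:
  "binary_BA BA \<longleftrightarrow> (\<exists>Cb. \<forall>N t D v a. 3 * t + 1 \<le> N \<and> D \<subseteq> {1..N} \<and> card D \<le> t \<longrightarrow>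
     binary_BA_run_ok BA Cb N t D v a)"
  unfolding binary_BA_def binary_BA_run_ok_def by (simp only: split_beta)

lemma binary_BA_correct:
  assumes "binary_BA BA" "3 * t + 1 \<le> N" "D \<subseteq> {1..N}" "card D \<le> t"
  shows "\<forall>i\<in>{1..N} - D. \<forall>j\<in>{1..N} - D. fst (BA N t D v a) i = fst (BA N t D v a) j"
    and "\<forall>x. (\<forall>i\<in>{1..N} - D. v i = x) \<longrightarrow> (\<forall>i\<in>{1..N} - D. fst (BA N t D v a) i = x)"
proof -
  obtain Cb where "binary_BA_run_ok BA Cb N t D v a"
    using assms unfolding binary_BA_iff by blast
  then show "\<forall>i\<in>{1..N} - D. \<forall>j\<in>{1..N} - D. fst (BA N t D v a) i = fst (BA N t D v a) j"
    and "\<forall>x. (\<forall>i\<in>{1..N} - D. v i = x) \<longrightarrow> (\<forall>i\<in>{1..N} - D. fst (BA N t D v a) i = x)"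
    unfolding binary_BA_run_ok_def by blast+
qed

lemma binary_BA_bounds:
  assumes "binary_BA BA"
  shows "\<exists>Cb\<ge>0. \<forall>N t D v a. 3 * t + 1 \<le> N \<and> D \<subseteq> {1..N} \<and> card D \<le> t \<longrightarrow>
    real (fst (snd (BA N t D v a))) \<le> Cb * max 1 (real t) \<and>
    real (snd (snd (BA N t D v a))) \<le> Cb * real N * max 1 (real t)"
proof -
  obtain Cb where Cb: "\<forall>N t D v a. 3 * t + 1 \<le> N \<and> D \<subseteq> {1..N} \<and> card D \<le> t \<longrightarrow>
     binary_BA_run_ok BA Cb N t D v a"
    using assms unfolding binary_BA_iff ..
  have "real (fst (snd (BA N t D v a))) \<le> max Cb 0 * max 1 (real t) \<and>
    real (snd (snd (BA N t D v a))) \<le> max Cb 0 * real N * max 1 (real t)"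
    if "3 * t + 1 \<le> N \<and> D \<subseteq> {1..N} \<and> card D \<le> t" for N t D v a
  proof -
    have "binary_BA_run_ok BA Cb N t D v a" using Cb that by blast
    moreover have "Cb * max 1 (real t) \<le> max Cb 0 * max 1 (real t)"
      "Cb * real N * max 1 (real t) \<le> max Cb 0 * real N * max 1 (real t)"
      by (intro mult_right_mono; simp)+
    ultimately show ?thesis unfolding binary_BA_run_ok_def by linarith
  qed
  then show ?thesis by (intro exI[of _ "max Cb 0"]) auto
qed

section \<open>The core protocol\<close>

locale core_execution =
  fixes F :: "nat \<Rightarrow> nat ring"
    and BA :: "nat \<Rightarrow> nat \<Rightarrow> nat set \<Rightarrow> (nat \<Rightarrow> bool) \<Rightarrow> 'a \<Rightarrow> (nat \<Rightarrow> bool) \<times> nat \<times> nat"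
    and N t l :: nat
    and w :: "nat \<Rightarrow> bool list"
    and D :: "nat set"
    and A :: "'a adv"
  assumes field: "field (cR F N t l)"
    and carrier: "carrier (cR F N t l) = {..<2 ^ cval N t l}"
    and binary_BA: "binary_BA BA"
    and resilience: "3 * t + 1 \<le> N"
    and dishonest: "D \<subseteq> {1..N}" "card D \<le> t"
    and honest_length: "\<And>i. i \<in> {1..N} - D \<Longrightarrow> length (w i) = l"
begin

abbreviation "honest \<equiv> {1..N} - D"

text \<open>Any \<open>N - t\<close> processors include at least \<open>quorum\<close> honest ones.\<close>
abbreviation "quorum \<equiv> N - t - card D"
abbreviation "symbol m p \<equiv> heval (cR F N t l) (kval t) p (enc (cval N t l) m)"

abbreviation "s1 \<equiv> cs1 F N t l w D A"
abbreviation "s2 \<equiv> cs2 F N t l w D A"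
abbreviation "s3 \<equiv> cs3 F N t l w D A"
abbreviation "u1 \<equiv> cu1 F N t l w D A"

lemma position_closed: "p \<le> N \<Longrightarrow> p \<in> carrier (cR F N t l)"
  using positions_fit_field[of N t l] carrier by auto

lemma nodes_closed: "{1..kval t} \<subseteq> carrier (cR F N t l)"
  using position_closed resilience by (auto simp: kval_def)

lemma enc_closed: "enc (cval N t l) m \<in> {1..kval t} \<rightarrow> carrier (cR F N t l)"
  using enc_less carrier by auto

lemma eq_if_symbols_agree:
  assumes "length m = l" "length m' = l" "S \<subseteq> {1..N}" "kval t \<le> card S"
    and "\<And>p. p \<in> S \<Longrightarrow> symbol m p = symbol m' p"
  shows "m = m'"
proof (rule enc_inj)
  show "length m = length m'" "length m \<le> kval t * cval N t l"
    using assms(1,2) message_fits_code by auto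
  show "enc (cval N t l) m j = enc (cval N t l) m' j" if "j \<in> {1..kval t}" for j
    using assms(3-5) position_closed
    by (intro heval_agree_imp_eq[OF field nodes_closed enc_closed enc_closed _ _ _ that]) auto
qed

lemma card_agreement_less:
  assumes "length m = l" "length m' = l" "m \<noteq> m'" "S \<subseteq> {1..N}"
    and "\<And>p. p \<in> S \<Longrightarrow> symbol m p = symbol m' p"
  shows "card S < kval t"
  using eq_if_symbols_agree[OF assms(1,2,4) _ assms(5)] assms(3) by (meson not_less)

lemma card_honest: "card honest = N - card D"
  using dishonest by (simp add: card_Diff_subset finite_subset)

lemma card_le_honest_plus_dishonest: "card {j\<in>cPr N. P j} \<le> card {j\<in>honest. P j} + card D"
proof -
  have "card {j\<in>cPr N. P j} \<le> card ({j\<in>honest. P j} \<union> D)"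
    using dishonest unfolding cPr_def by (intro card_mono) (auto intro: finite_subset)
  also have "\<dots> \<le> card {j\<in>honest. P j} + card D" by (rule card_Un_le)
  finally show ?thesis .
qed

lemma cy_eq_symbol: "cy F N t l w i j = symbol (w i) j"
  by (simp add: cy_def)

lemma link_symbols:
  assumes "i \<in> honest" "j \<in> honest" "u1 i j"
  shows "symbol (w i) j = symbol (w j) j" "symbol (w j) i = symbol (w i) i"
  using assms by (auto simp: cu1_def crcv1_def cy_eq_symbol)

lemma link_if_same_message: "j \<in> honest \<Longrightarrow> w i = w j \<Longrightarrow> u1 i j"
  by (simp add: cu1_def crcv1_def cy_eq_symbol)

lemma s2_imp_s1: "s2 i \<Longrightarrow> s1 i" and s3_imp_s2: "s3 i \<Longrightarrow> s2 i"
  by (simp_all add: cs2_def cs3_def)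

lemma crec1_honest: "j \<in> honest \<Longrightarrow> crec1 F N t l w D A i j = s1 j"
  by (simp add: crec1_def)

lemma crec2_honest: "j \<in> honest \<Longrightarrow> crec2 F N t l w D A i j = s2 j"
  using s2_imp_s1[of j] by (auto simp: crec2_def csnd2_def crec1_honest)

lemma crec3_honest: "j \<in> honest \<Longrightarrow> crec3 F N t l w D A i j = s3 j"
  using s3_imp_s2[of j] by (auto simp: crec3_def csnd3_def crec2_honest)

lemma s1_support: "s1 i \<Longrightarrow> quorum \<le> card {j\<in>honest. u1 i j}"
  using card_le_honest_plus_dishonest[of "u1 i"] unfolding cs1_def by linarith

lemma s2_support:
  assumes "s2 i"
  shows "quorum \<le> card {j\<in>honest. u1 i j \<and> s1 j}"
proof -
  have eq: "{j\<in>honest. cu2 F N t l w D A i j} = {j\<in>honest. u1 i j \<and> s1 j}"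
    by (auto simp: cu2_def crec1_honest)
  have "N - t \<le> card {j\<in>cPr N. cu2 F N t l w D A i j}"
    using assms by (simp add: cs2_def)
  then show ?thesis
    using card_le_honest_plus_dishonest[of "cu2 F N t l w D A i", unfolded eq] by linarith
qed

lemma s3_support:
  assumes "s3 i"
  shows "quorum \<le> card {j\<in>honest. u1 i j \<and> s2 j}"
proof -
  have eq: "{j\<in>honest. cu3 F N t l w D A i j} = {j\<in>honest. u1 i j \<and> s2 j}"
    using s2_imp_s1
    by (auto simp: cu3_def cu2_def crec1_honest crec2_honest)
  have "N - t \<le> card {j\<in>cPr N. cu3 F N t l w D A i j}"
    using assms by (simp add: cs3_def)
  then show ?thesis
    using card_le_honest_plus_dishonest[of "cu3 F N t l w D A i", unfolded eq] by linarith
qed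

lemma card_honest_lt_two_quorums: "card honest < 2 * quorum"
  using card_honest resilience dishonest by linarith

lemma kval_le_quorum: "kval t \<le> quorum"
  using resilience dishonest by (simp add: kval_def)

lemma card_honest_three_quorums: "card honest + 3 * (kval t - 1) < 3 * quorum"
  using card_honest resilience dishonest by (simp add: kval_def)

definition consistent :: "bool list \<Rightarrow> nat set" where
  "consistent m = {p\<in>honest. symbol m p = symbol (w p) p}"

lemma links_consistent: "i \<in> honest \<Longrightarrow> {j\<in>honest. u1 i j} \<subseteq> consistent (w i)"
  by (auto simp: consistent_def link_symbols)

lemma card_consistent_Int:
  assumes "i \<in> honest" "i' \<in> honest" "w i \<noteq> w i'"
  shows "card (consistent (w i) \<inter> consistent (w i')) < kval t"
  using assms
  by (intro card_agreement_less[of "w i" "w i'"]) (auto simp: consistent_def honest_length)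

lemma quorum_le_card_consistent:
  assumes "i \<in> honest" "s1 i"
  shows "quorum \<le> card (consistent (w i))"
  using s1_support[OF assms(2)] card_mono[OF _ links_consistent[OF assms(1)]]
  by (simp add: consistent_def)

text \<open>Inclusion--exclusion: each consistent set contains a quorum, and two of them share fewer
  than \<open>k\<close> positions.\<close>

lemma no_three_messages:
  assumes "i1 \<in> honest" "i2 \<in> honest" "i3 \<in> honest" "s1 i1" "s1 i2" "s1 i3"
    and "w i1 \<noteq> w i2" "w i1 \<noteq> w i3" "w i2 \<noteq> w i3"
  shows False
proof -
  let ?Y1 = "consistent (w i1)" and ?Y2 = "consistent (w i2)" and ?Y3 = "consistent (w i3)"
  have fin: "finite ?Y1" "finite ?Y2" "finite ?Y3" by (simp_all add: consistent_def)
  have "card (?Y1 \<union> ?Y2 \<union> ?Y3) \<le> card honest" by (intro card_mono) (auto simp: consistent_def)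
  then show False
    using card_add3_le[OF fin] card_honest_three_quorums
      quorum_le_card_consistent[OF assms(1,4)] quorum_le_card_consistent[OF assms(2,5)]
      quorum_le_card_consistent[OF assms(3,6)] card_consistent_Int[OF assms(1,2,7)]
      card_consistent_Int[OF assms(1,3,8)] card_consistent_Int[OF assms(2,3,9)]
    by linarith
qed

lemma at_most_two_messages:
  assumes "i \<in> honest" "i' \<in> honest" "p \<in> honest" "s1 i" "s1 i'" "s1 p" "w i \<noteq> w i'"
  shows "w p = w i \<or> w p = w i'"
  using no_three_messages[OF assms(1-6)] assms(7) by metis

lemma s3_message_has_quorum:
  assumes i: "i \<in> honest" and i': "i' \<in> honest" and s: "s3 i" "s3 i'" and ne: "w i \<noteq> w i'"
  shows "quorum \<le> card {p\<in>honest. s1 p \<and> w p = w i}"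
proof -
  let ?Z = "{p\<in>honest. symbol (w i) p = symbol (w i') p}"
  have card_Z: "card ?Z < kval t"
    using i i' ne by (intro card_agreement_less[of "w i" "w i'"]) (auto simp: honest_length)
  have s1: "s1 i" "s1 i'" using s s3_imp_s2 s2_imp_s1 by auto
  have "\<exists>j\<in>honest. s2 j \<and> w j = w i \<and> j \<notin> ?Z"
  proof (rule ccontr)
    assume none: "\<not> ?thesis"
    have "{j\<in>honest. u1 i j \<and> s2 j} \<subseteq> ?Z"
    proof safe
      fix j assume j: "j \<in> {1..N}" "j \<notin> D" and link: "u1 i j" and "s2 j"
      then have "w j = w i \<or> w j = w i'"
        using at_most_two_messages[OF i i' _ s1] s2_imp_s1 ne by simp
      then show "symbol (w i) j = symbol (w i') j"
        using none j \<open>s2 j\<close> link_symbols(1)[OF i _ link] by auto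
    qed
    then have "card {j\<in>honest. u1 i j \<and> s2 j} \<le> card ?Z" by (intro card_mono) auto
    then show False using s3_support[OF s(1)] kval_le_quorum card_Z by linarith
  qed
  then obtain j where j: "j \<in> honest" "s2 j" "w j = w i" "j \<notin> ?Z" by blast
  have "{p\<in>honest. u1 j p \<and> s1 p} \<subseteq> {p\<in>honest. s1 p \<and> w p = w i}"
  proof safe
    fix p assume p: "p \<in> {1..N}" "p \<notin> D" and link: "u1 j p" and "s1 p"
    have "w p \<noteq> w i'"
      using link_symbols(2)[OF j(1) _ link] p j by auto
    then show "w p = w i" using at_most_two_messages[OF i i' _ s1 \<open>s1 p\<close> ne] p by auto
  qed
  then have "card {p\<in>honest. u1 j p \<and> s1 p} \<le> card {p\<in>honest. s1 p \<and> w p = w i}"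
    by (intro card_mono) auto
  then show ?thesis using s2_support[OF j(2)] by linarith
qed

text \<open>Two disjoint quorums do not fit among the honest processors.\<close>

lemma s3_same_message:
  assumes i: "i \<in> honest" and i': "i' \<in> honest" and s: "s3 i" "s3 i'"
  shows "w i = w i'"
proof (rule ccontr)
  assume ne: "w i \<noteq> w i'"
  let ?M = "{p\<in>honest. s1 p \<and> w p = w i}" and ?M' = "{p\<in>honest. s1 p \<and> w p = w i'}"
  have "card ?M + card ?M' = card (?M \<union> ?M')"
    using ne by (intro card_Un_disjoint[symmetric]) auto
  also have "\<dots> \<le> card honest" by (intro card_mono) auto
  moreover have "quorum \<le> card ?M" "quorum \<le> card ?M'"
    using s3_message_has_quorum[OF i i' s ne] s3_message_has_quorum[OF i' i s(2,1)] ne by auto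
  ultimately show False using card_honest_lt_two_quorums by linarith
qed

abbreviation "dec \<equiv> cdec F BA N t l w D A"
abbreviation "out \<equiv> core_out F BA N t l w D A"

lemma dec_agree: "i \<in> honest \<Longrightarrow> j \<in> honest \<Longrightarrow> dec i = dec j"
  using binary_BA_correct(1)[OF binary_BA resilience dishonest] unfolding cdec_def cBA_def by blast

lemma dec_valid:
  "(\<And>j. j \<in> honest \<Longrightarrow> cvote F N t l w D A j = x) \<Longrightarrow> i \<in> honest \<Longrightarrow> dec i = x"
  using binary_BA_correct(2)[OF binary_BA resilience dishonest] unfolding cdec_def cBA_def by blast

lemma decision_imp_many_s3:
  assumes "i \<in> honest" "dec i"
  shows "t + 1 \<le> card {j\<in>honest. s3 j}"
proof -
  obtain i0 where i0: "i0 \<in> honest" "cvote F N t l w D A i0"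
    using dec_valid[of False i] assms by blast
  have eq: "{j\<in>honest. crec3 F N t l w D A i0 j} = {j\<in>honest. s3 j}"
    by (auto simp: crec3_honest)
  show ?thesis
    using i0(2) card_le_honest_plus_dishonest[of "crec3 F N t l w D A i0", unfolded eq] dishonest
    unfolding cvote_def by linarith
qed

text \<open>Once the binary agreement decides 1, more than \<open>t\<close> honest processors keep success
  indicator 1, so their symbols outvote the dishonest ones in the majority rule of Phase 4.\<close>

lemma cnewy_eq_symbol:
  assumes dec: "i \<in> honest" "dec i" and j0: "j0 \<in> honest" "s3 j0" and p: "p \<in> honest"
  shows "cnewy F N t l w D A p = symbol (w j0) p"
proof -
  let ?S = "{j\<in>cPr N. crec3 F N t l w D A p j}"
  let ?f = "\<lambda>j. fst (crcv1 F N t l w D A p j)"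
  have good: "?f j = symbol (w j0) p \<and> j \<in> ?S" if "j \<in> honest" "s3 j" for j
    using that s3_same_message[OF that(1) j0(1) that(2) j0(2)]
    by (auto simp: crcv1_def cy_eq_symbol crec3_honest cPr_def)
  have "{j\<in>honest. s3 j} \<subseteq> {j\<in>?S. ?f j = symbol (w j0) p}" using good by auto
  then have "card {j\<in>honest. s3 j} \<le> card {j\<in>?S. ?f j = symbol (w j0) p}"
    by (intro card_mono) (auto simp: cPr_def)
  moreover have "{j\<in>?S. ?f j \<noteq> symbol (w j0) p} \<subseteq> D"
    using good crec3_honest by (auto simp: cPr_def)
  then have "card {j\<in>?S. ?f j \<noteq> symbol (w j0) p} \<le> card D"
    using dishonest by (intro card_mono) (auto intro: finite_subset)
  ultimately have "mostfreq ?S ?f = symbol (w j0) p"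
    using decision_imp_many_s3[OF dec] dishonest
    by (intro mostfreq_eq_majority) (auto simp: cPr_def)
  then show ?thesis by (simp add: cnewy_def)
qed

lemma cz_eq_symbol:
  assumes dec: "i \<in> honest" "dec i" "\<not> s3 i" and j0: "j0 \<in> honest" "s3 j0" and p: "p \<in> honest"
  shows "cz F BA N t l w D A i p = symbol (w j0) p"
proof (cases "p = i")
  case True
  then show ?thesis using cnewy_eq_symbol[OF dec(1,2) j0 dec(1)] by (simp add: cz_def)
next
  case False
  show ?thesis
  proof (cases "s3 p")
    case True
    then show ?thesis
      using False p s3_same_message[OF p j0(1) True j0(2)]
      by (simp add: cz_def crec3_honest crcv1_def cy_eq_symbol)
  next
    case not_s3: False
    have "csnd4 F BA N t l w D A p i"
      using dec dec_agree[OF p dec(1)] not_s3 False by (simp add: csnd4_def crec3_honest)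
    then show ?thesis
      using False p not_s3 cnewy_eq_symbol[OF dec(1,2) j0 p]
      by (simp add: cz_def crec3_honest crcv4_def)
  qed
qed

lemma decoding_unique:
  assumes m0: "length m0 = l" "\<And>p. p \<in> honest \<Longrightarrow> symbol m0 p = z p"
    and m: "length m = l" "G \<subseteq> {1..N}" "N - t \<le> card G" "\<And>p. p \<in> G \<Longrightarrow> symbol m p = z p"
  shows "m = m0"
proof (rule eq_if_symbols_agree[OF m(1) m0(1)])
  show "G \<inter> honest \<subseteq> {1..N}" using m(2) by auto
  have "card G + card honest = card (G \<union> honest) + card (G \<inter> honest)"
    using m(2) by (intro card_Un_Int) (auto intro: finite_subset)
  moreover have "card (G \<union> honest) \<le> N"
    using m(2) card_mono[of "{1..N}" "G \<union> honest"] by auto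
  ultimately show "kval t \<le> card (G \<inter> honest)"
    using m(3) card_honest resilience dishonest by (simp add: kval_def)
  show "\<And>p. p \<in> G \<inter> honest \<Longrightarrow> symbol m p = symbol m0 p" using m(4) m0(2) by auto
qed

lemma cdecode_eq_Some:
  assumes "length m0 = l" "\<And>p. p \<in> honest \<Longrightarrow> symbol m0 p = z p"
  shows "cdecode F N t l z = Some m0"
proof -
  let ?Q = "\<lambda>m. length m = l \<and> N - t \<le> card {j\<in>cPr N. symbol m j = z j}"
  have "card honest \<le> card {j\<in>cPr N. symbol m0 j = z j}"
    using assms(2) by (intro card_mono) (auto simp: cPr_def)
  then have Q0: "?Q m0" using assms(1) card_honest dishonest by linarith
  let ?G = "{j\<in>cPr N. symbol (SOME m. ?Q m) j = z j}"
  have "?Q (SOME m. ?Q m)" using Q0 by (rule someI)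
  then have "(SOME m. ?Q m) = m0"
    by (intro decoding_unique[OF assms, of _ ?G]) (auto simp: cPr_def)
  then show ?thesis using Q0 by (auto simp: cdecode_def)
qed

lemma core_out_decided:
  assumes "i \<in> honest" "dec i"
  shows "\<exists>j0\<in>honest. \<forall>i'\<in>honest. out i' = Some (w j0)"
proof -
  have "0 < card {j\<in>honest. s3 j}" using decision_imp_many_s3[OF assms] by linarith
  then obtain j0 where j0: "j0 \<in> honest" "s3 j0" by (auto simp: card_gt_0_iff)
  have "out i' = Some (w j0)" if i': "i' \<in> honest" for i'
  proof (cases "s3 i'")
    case True
    then show ?thesis
      using dec_agree[OF i' assms(1)] assms(2) s3_same_message[OF i' j0(1) True j0(2)]
      by (simp add: core_out_def)
  next
    case False
    have "cdecode F N t l (cz F BA N t l w D A i') = Some (w j0)"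
      using cz_eq_symbol[OF i' _ False j0] dec_agree[OF i' assms(1)] assms(2) j0(1)
      by (intro cdecode_eq_Some) (auto simp: honest_length)
    then show ?thesis
      using dec_agree[OF i' assms(1)] assms(2) False by (simp add: core_out_def)
  qed
  then show ?thesis using j0(1) by blast
qed

lemma core_out_agree: "i \<in> honest \<Longrightarrow> j \<in> honest \<Longrightarrow> out i = out j"
  using core_out_decided dec_agree by (metis core_out_def)

lemma core_out_valid:
  assumes all: "\<And>i. i \<in> honest \<Longrightarrow> w i = m" and i: "i \<in> honest"
  shows "out i = Some m"
proof -
  have honest_subset: "N - t \<le> card {j\<in>cPr N. P j}" if "\<And>j. j \<in> honest \<Longrightarrow> P j" for P
  proof -
    have "card honest \<le> card {j\<in>cPr N. P j}" using that by (intro card_mono) (auto simp: cPr_def)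
    then show ?thesis using card_honest dishonest by linarith
  qed
  have links: "u1 i j" if "i \<in> honest" "j \<in> honest" for i j
    using that all link_if_same_message by metis
  have s1: "s1 i" if "i \<in> honest" for i
    using honest_subset[of "u1 i"] links that by (simp add: cs1_def)
  have s2: "s2 i" if "i \<in> honest" for i
    using honest_subset[of "cu2 F N t l w D A i"] links s1 that
    by (simp add: cs2_def cu2_def crec1_honest)
  have s3: "s3 i" if "i \<in> honest" for i
    using honest_subset[of "cu3 F N t l w D A i"] links s1 s2 that
    by (simp add: cs3_def cu3_def cu2_def crec1_honest crec2_honest)
  have "cvote F N t l w D A j" if "j \<in> honest" for j
    using honest_subset[of "crec3 F N t l w D A j"] s3 resilience
    by (simp add: cvote_def crec3_honest)
  then have "dec i" using dec_valid[of True i] i by blast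
  then show ?thesis using s3[OF i] all[OF i] by (simp add: core_out_def)
qed

lemma core_out_length:
  assumes "i \<in> honest" "out i = Some m"
  shows "length m = l"
proof (cases "s3 i")
  case True
  then show ?thesis using assms by (auto simp: core_out_def honest_length split: if_splits)
next
  case False
  let ?Q = "\<lambda>m. length m = l \<and>
    N - t \<le> card {j\<in>cPr N. symbol m j = cz F BA N t l w D A i j}"
  have "\<exists>m. ?Q m" "m = (SOME m. ?Q m)"
    using assms False by (auto simp: core_out_def cdecode_def split: if_splits)
  then show ?thesis using someI_ex[of ?Q] by simp
qed

lemma outer_decoding_eq:
  assumes r: "\<And>j. j \<in> honest \<Longrightarrow> r j = map_option (\<lambda>m. symbol m j) (out j)"
    and i0: "i0 \<in> honest"
  shows "(if \<exists>m. length m = l \<and> N - t \<le> card {j\<in>{1..N}. r j = Some (symbol m j)}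
    then Some (SOME m. length m = l \<and> N - t \<le> card {j\<in>{1..N}. r j = Some (symbol m j)})
    else None) = out i0"
proof -
  let ?G = "\<lambda>m. {j\<in>{1..N}. r j = Some (symbol m j)}"
  let ?Q = "\<lambda>m. length m = l \<and> N - t \<le> card (?G m)"
  have r0: "r j = map_option (\<lambda>m. symbol m j) (out i0)" if "j \<in> honest" for j
    using r[OF that] core_out_agree[OF that i0] by simp
  show ?thesis
  proof (cases "out i0")
    case None
    have "?G m \<subseteq> D" for m using r0 None by fastforce
    then have card_G: "card (?G m) \<le> card D" for m
      using dishonest by (intro card_mono) (auto intro: finite_subset)
    have "card (?G m) < N - t" for m using card_G[of m] resilience dishonest(2) by linarith
    then have "\<not> ?Q m" for m by (simp add: not_le)
    then show ?thesis using None by auto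
  next
    case (Some m0)
    have "card honest \<le> card (?G m0)" using r0 Some by (intro card_mono) auto
    then have Q0: "?Q m0"
      using core_out_length[OF i0 Some] card_honest dishonest by linarith
    have "?Q (SOME m. ?Q m)" using Q0 by (rule someI)
    then have "(SOME m. ?Q m) = m0"
      using r0 Some core_out_length[OF i0 Some]
      by (intro decoding_unique[of m0 "\<lambda>j. the (r j)" _ "?G (SOME m. ?Q m)"]) auto
    then show ?thesis using Q0 Some by auto
  qed
qed

end

definition cool_size :: "real \<Rightarrow> nat \<Rightarrow> nat \<Rightarrow> nat" where
  "cool_size C0 n t = (if real n \<le> C0 * real t then n else 3 * t + 1)"

lemma cool_size_bounds:
  assumes "3 * t + 1 \<le> n"
  shows "3 * t + 1 \<le> cool_size C0 n t" "cool_size C0 n t \<le> n"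
    and "0 \<le> C0 \<Longrightarrow> real (cool_size C0 n t) \<le> (C0 + 4) * max 1 (real t)"
proof -
  show "3 * t + 1 \<le> cool_size C0 n t" "cool_size C0 n t \<le> n"
    using assms by (auto simp: cool_size_def)
  assume C0: "0 \<le> C0"
  have "C0 * real t \<le> C0 * max 1 (real t)" using C0 by (intro mult_left_mono) auto
  moreover have "real (3 * t + 1) \<le> 4 * max 1 (real t)" by simp
  moreover have "0 \<le> C0 * max 1 (real t)" using C0 by simp
  ultimately show "real (cool_size C0 n t) \<le> (C0 + 4) * max 1 (real t)"
    unfolding cool_size_def by (auto simp: distrib_right)
qed

lemma core_execution_restrict:
  assumes fields: "\<And>c. 1 \<le> c \<Longrightarrow> field (F c) \<and> carrier (F c) = {..<2 ^ c}"
    and BA: "binary_BA BA"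
    and N: "3 * t + 1 \<le> N" "N \<le> n"
    and hyps: "1 \<le> l" "D \<subseteq> {1..n}" "card D \<le> t" "\<forall>i\<in>{1..n} - D. length (w i) = l"
  shows "core_execution F BA N t l w (D \<inter> {1..N})"
proof -
  have "field (cR F N t l)" "carrier (cR F N t l) = {..<2 ^ cval N t l}"
    using fields[OF cval_ge_1[OF hyps(1)]] by (simp_all add: cR_def)
  moreover have "card (D \<inter> {1..N}) \<le> card D"
    using hyps(2) by (intro card_mono) (auto intro: finite_subset)
  ultimately show ?thesis
    using BA N hyps(3,4) unfolding core_execution_def by auto
qed

lemma cool_correct:
  assumes fields: "\<And>c. 1 \<le> c \<Longrightarrow> field (F c) \<and> carrier (F c) = {..<2 ^ c}"
    and BA: "binary_BA BA"
    and hyps: "3 * t + 1 \<le> n" "1 \<le> l" "D \<subseteq> {1..n}" "card D \<le> t"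
      "\<forall>i\<in>{1..n} - D. length (w i) = l"
  shows "(\<forall>i\<in>{1..n} - D. \<forall>j\<in>{1..n} - D.
          cool_out F C0 BA n t l w D A i = cool_out F C0 BA n t l w D A j) \<and>
       (\<forall>m. (\<forall>i\<in>{1..n} - D. w i = m) \<longrightarrow>
          (\<forall>i\<in>{1..n} - D. cool_out F C0 BA n t l w D A i = Some m))"
proof -
  define N where "N = cool_size C0 n t"
  have N: "3 * t + 1 \<le> N" "N \<le> n" using cool_size_bounds[OF hyps(1)] by (simp_all add: N_def)
  interpret core: core_execution F BA N t l w "D \<inter> {1..N}" A
    using core_execution_restrict[OF fields BA N hyps(2-5)] .
  have "0 < card core.honest" using core.card_honest core.dishonest N(1) by linarith
  then obtain i0 where i0: "i0 \<in> core.honest" by (metis card_gt_0_iff ex_in_conv)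
  have key: "cool_out F C0 BA n t l w D A i = core.out i0" if i: "i \<in> {1..n} - D" for i
  proof (cases "real n \<le> C0 * real t")
    case True
    then have "N = n" "D \<inter> {1..N} = D" using hyps(3) by (auto simp: N_def cool_size_def)
    then show ?thesis
      using True core.core_out_agree[OF _ i0, of i] i by (simp add: cool_out_def)
  next
    case large: False
    then have N_eq: "N = 3 * t + 1" by (simp add: N_def cool_size_def)
    show ?thesis
    proof (cases "i \<le> N")
      case True
      then show ?thesis
        using large core.core_out_agree[OF _ i0, of i] i by (simp add: cool_out_def N_eq Let_def)
    next
      case False
      let ?R = "F (cval N t l)"
      let ?sym = "\<lambda>m j. heval ?R (kval t) j (enc (cval N t l) m)"
      let ?r = "\<lambda>j. if j \<in> D then map_option (san ?R) (a5 A j i)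
        else map_option (\<lambda>m. ?sym m j) (core.out j)"
      have "(if \<exists>m. length m = l \<and> N - t \<le> card {j\<in>{1..N}. ?r j = Some (?sym m j)}
          then Some (SOME m. length m = l \<and> N - t \<le> card {j\<in>{1..N}. ?r j = Some (?sym m j)})
          else None) = core.out i0"
        by (rule core.outer_decoding_eq[unfolded cR_def, OF _ i0]) auto
      moreover have "\<not> i \<le> 3 * t + 1" using False N_eq by simp
      ultimately show ?thesis
        using large unfolding cool_out_def Let_def by (simp only: N_eq[symmetric] if_False)
    qed
  qed
  have "core.out i0 = Some m" if all: "\<forall>i\<in>{1..n} - D. w i = m" for m
  proof (rule core.core_out_valid[OF _ i0])
    show "w i = m" if "i \<in> core.honest" for i using that all N(2) by auto
  qed
  then show ?thesis using key by simp
qed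

lemma core_bits_le:
  "core_bits F BA N t l w D A
    \<le> 3 * N * (N * (cval N t l + 1)) + snd (snd (cBA F BA N t l w D A))"
proof -
  let ?c = "cval N t l"
  let ?g = "\<lambda>i. 2 * ?c * (N - 1) + (N - 1)
      + (if csnd2 F N t l w D A i then N - 1 else 0) + (if csnd3 F N t l w D A i then N - 1 else 0)
      + ?c * card {j\<in>cPr N. csnd4 F BA N t l w D A i j}"
  have g: "?g i \<le> 3 * (N * (?c + 1))" for i
  proof -
    have "card {j\<in>cPr N. csnd4 F BA N t l w D A i j} \<le> card (cPr N)"
      by (intro card_mono) (auto simp: cPr_def)
    then have "?c * card {j\<in>cPr N. csnd4 F BA N t l w D A i j} \<le> ?c * N" by (simp add: cPr_def)
    moreover have "2 * ?c * (N - 1) \<le> 2 * (?c * N)" by simp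
    moreover have "3 * (N * (?c + 1)) = 3 * (?c * N) + 3 * N" by (simp add: algebra_simps)
    moreover have "(if csnd2 F N t l w D A i then N - 1 else 0) \<le> N"
      "(if csnd3 F N t l w D A i then N - 1 else 0) \<le> N" by simp_all
    ultimately show ?thesis by linarith
  qed
  have "sum ?g (cPr N - D) \<le> card (cPr N - D) * (3 * (N * (?c + 1)))"
    using sum_bounded_above[of "cPr N - D" ?g] g by simp
  also have "\<dots> \<le> card (cPr N) * (3 * (N * (?c + 1)))"
    by (intro mult_right_mono card_mono) (auto simp: cPr_def)
  finally show ?thesis unfolding core_bits_def by (simp add: cPr_def algebra_simps)
qed

lemma cool_rounds_le:
  assumes "D \<subseteq> {1..n}"
  shows "cool_rounds F C0 BA n t l w D A
    \<le> 6 + fst (snd (cBA F BA (cool_size C0 n t) t l w (D \<inter> {1..cool_size C0 n t}) A))"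
proof -
  have "D \<inter> {1..n} = D" using assms by auto
  then show ?thesis by (simp add: cool_rounds_def core_rounds_def cool_size_def)
qed

lemma cool_bits_le:
  fixes C0 :: real and n t :: nat
  assumes n: "3 * t + 1 \<le> n" and D: "D \<subseteq> {1..n}"
  defines "N \<equiv> cool_size C0 n t"
  shows "cool_bits F C0 BA n t l w D A
    \<le> 4 * n * (N * (cval N t l + 1)) + snd (snd (cBA F BA N t l w (D \<inter> {1..N}) A))"
proof (cases "real n \<le> C0 * real t")
  case True
  then have "N = n" "D \<inter> {1..N} = D" using D by (auto simp: N_def cool_size_def)
  then show ?thesis
    using True core_bits_le[of F BA n t l w D A] by (simp add: cool_bits_def)
next
  case False
  then have N: "N = 3 * t + 1" by (simp add: N_def cool_size_def)
  have "(\<Sum>j\<in>{1..N} - D. (cval N t l + 1) * (n - N)) \<le> (\<Sum>j\<in>{1..N}. (cval N t l + 1) * (n - N))"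
    by (intro sum_mono2) auto
  also have "\<dots> = N * ((cval N t l + 1) * (n - N))" by simp
  also have "\<dots> \<le> N * ((cval N t l + 1) * n)" by (intro mult_left_mono) auto
  also have "\<dots> = n * (N * (cval N t l + 1))" by (simp only: ac_simps)
  finally have "cool_bits F C0 BA n t l w D A
      \<le> core_bits F BA N t l w (D \<inter> {1..N}) A + n * (N * (cval N t l + 1))"
    using False by (simp add: cool_bits_def N Let_def)
  moreover have "3 * N * (N * (cval N t l + 1)) \<le> 3 * n * (N * (cval N t l + 1))"
    using n N by (intro mult_right_mono) auto
  ultimately show ?thesis using core_bits_le[of F BA N t l w "D \<inter> {1..N}" A] by linarith
qed

lemma cool_bits_real_le:
  fixes C0 Cb :: real and n t l :: nat
  defines "N \<equiv> cool_size C0 n t"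
  assumes n: "3 * t + 1 \<le> n" and l: "1 \<le> l" and D: "D \<subseteq> {1..n}"
    and C0: "0 \<le> C0" and Cb: "0 \<le> Cb"
    and BA_bits: "real (snd (snd (cBA F BA N t l w (D \<inter> {1..N}) A))) \<le> Cb * real N * max 1 (real t)"
  shows "real (cool_bits F C0 BA n t l w D A)
    \<le> 2 * (4 * ((C0 + 4) * (2 * log 2 (C0 + 5) + 5)) + Cb)
        * max (real n * real l) (real n * real t * log 2 (real t))"
proof -
  let ?T = "max 1 (real t)" and ?\<Lambda> = "max 1 (log 2 (real t))"
  let ?CK = "(C0 + 4) * (2 * log 2 (C0 + 5) + 5)"
  have N: "N \<le> n" "real N \<le> (C0 + 4) * ?T"
    using cool_size_bounds[OF n] C0 by (simp_all add: N_def)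
  have "cool_bits F C0 BA n t l w D A
      \<le> 4 * n * (N * (cval N t l + 1)) + snd (snd (cBA F BA N t l w (D \<inter> {1..N}) A))"
    unfolding N_def by (rule cool_bits_le[OF n D])
  then have "real (cool_bits F C0 BA n t l w D A)
      \<le> real (4 * n * (N * (cval N t l + 1))) + real (snd (snd (cBA F BA N t l w (D \<inter> {1..N}) A)))"
    by (simp only: of_nat_add[symmetric] of_nat_le_iff)
  also have "\<dots> \<le> 4 * real n * (real N * (real (cval N t l) + 1)) + Cb * real N * ?T"
    using BA_bits by (simp add: algebra_simps)
  also have "\<dots> \<le> 4 * real n * (?CK * (real l + ?T * ?\<Lambda>)) + Cb * (real n * (?T * ?\<Lambda>))"
  proof (rule add_mono)
    have "real N * (real (cval N t l) + 1) \<le> ?CK * (real l + ?T * ?\<Lambda>)"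
      using size_times_cval_le[OF _ N(2), of l] C0 by (simp add: add.assoc)
    then show "4 * real n * (real N * (real (cval N t l) + 1))
        \<le> 4 * real n * (?CK * (real l + ?T * ?\<Lambda>))"
      by (intro mult_left_mono) auto
    have "real N * ?T \<le> real n * (?T * ?\<Lambda>)"
      using N(1) by (intro mult_mono) (auto simp: mult_le_cancel_left1)
    then show "Cb * real N * ?T \<le> Cb * (real n * (?T * ?\<Lambda>))"
      using Cb by (simp add: mult.assoc mult_left_mono)
  qed
  also have "\<dots> \<le> (4 * ?CK + Cb) * (real n * (real l + ?T * ?\<Lambda>))"
    using Cb by (simp add: algebra_simps)
  also have "\<dots> \<le> (4 * ?CK + Cb) * (2 * max (real n * real l) (real n * real t * log 2 (real t)))"
    using size_log_le_max[OF l, of n] C0 Cb by (intro mult_left_mono) auto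
  also have "\<dots> = 2 * (4 * ?CK + Cb) * max (real n * real l) (real n * real t * log 2 (real t))"
    by simp
  finally show ?thesis .
qed

lemma cool_complexity:
  assumes BA: "binary_BA BA" and C0: "0 \<le> C0"
  shows "\<exists>C. \<forall>n t l (w :: nat \<Rightarrow> bool list) D (A :: 'a adv).
    3 * t + 1 \<le> n \<and> 1 \<le> l \<and> D \<subseteq> {1..n} \<and> card D \<le> t \<longrightarrow>
      real (cool_rounds F C0 BA n t l w D A) \<le> C * max 1 (real t) \<and>
      real (cool_bits F C0 BA n t l w D A)
        \<le> C * max (real n * real l) (real n * real t * log 2 (real t))"
proof -
  obtain Cb :: real where Cb0: "0 \<le> Cb"
    and Cb: "\<forall>N t D v a. 3 * t + 1 \<le> N \<and> D \<subseteq> {1..N} \<and> card D \<le> t \<longrightarrow>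
      real (fst (snd (BA N t D v a))) \<le> Cb * max 1 (real t) \<and>
      real (snd (snd (BA N t D v a))) \<le> Cb * real N * max 1 (real t)"
    using binary_BA_bounds[OF BA] by blast
  define C where "C = 2 * (4 * ((C0 + 4) * (2 * log 2 (C0 + 5) + 5)) + Cb) + 6"
  show ?thesis
  proof (intro exI[of _ C] allI impI conjI)
    fix n t l :: nat and w :: "nat \<Rightarrow> bool list" and D :: "nat set" and A :: "'a adv"
    assume "3 * t + 1 \<le> n \<and> 1 \<le> l \<and> D \<subseteq> {1..n} \<and> card D \<le> t"
    then have n: "3 * t + 1 \<le> n" and l: "1 \<le> l" and D: "D \<subseteq> {1..n}" "card D \<le> t" by auto
    define N where "N = cool_size C0 n t"
    have "card (D \<inter> {1..N}) \<le> t"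
      using D by (meson card_mono finite_subset finite_atLeastAtMost inf_le1 le_trans)
    then have BA_N: "real (fst (snd (cBA F BA N t l w (D \<inter> {1..N}) A))) \<le> Cb * max 1 (real t)"
      "real (snd (snd (cBA F BA N t l w (D \<inter> {1..N}) A))) \<le> Cb * real N * max 1 (real t)"
      using Cb cool_size_bounds(1)[OF n] by (simp_all add: cBA_def N_def)
    have CK: "0 \<le> (C0 + 4) * (2 * log 2 (C0 + 5) + 5)" using C0 by simp
    have T: "1 \<le> max 1 (real t)" by simp
    have "cool_rounds F C0 BA n t l w D A \<le> 6 + fst (snd (cBA F BA N t l w (D \<inter> {1..N}) A))"
      unfolding N_def by (rule cool_rounds_le[OF D(1)])
    then have "real (cool_rounds F C0 BA n t l w D A) \<le> 6 + Cb * max 1 (real t)"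
      using BA_N(1) by linarith
    also have "\<dots> \<le> (Cb + 6) * max 1 (real t)" using T by (simp add: algebra_simps)
    also have "\<dots> \<le> C * max 1 (real t)" using CK Cb0 by (intro mult_right_mono) (auto simp: C_def)
    finally show "real (cool_rounds F C0 BA n t l w D A) \<le> C * max 1 (real t)" .
    show "real (cool_bits F C0 BA n t l w D A)
        \<le> C * max (real n * real l) (real n * real t * log 2 (real t))"
      by (rule order_trans[OF cool_bits_real_le[OF n l D(1) C0 Cb0 BA_N(2)[unfolded N_def]]])
        (intro mult_right_mono, auto simp: C_def le_max_iff_disj)
  qed
qed

theorem theorem1:
  fixes F :: "nat \<Rightarrow> nat ring"
    and C0 :: real
    and BA :: "nat \<Rightarrow> nat \<Rightarrow> nat set \<Rightarrow> (nat \<Rightarrow> bool) \<Rightarrow> 'a \<Rightarrow> (nat \<Rightarrow> bool) \<times> nat \<times> nat"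
  assumes GF: "\<forall>c\<ge>1. field (F c) \<and> carrier (F c) = {..<2 ^ c} \<and> \<zero>\<^bsub>F c\<^esub> = 0"
    and BA: "binary_BA BA"
    and C0: "C0 > 0"
  shows "\<exists>C::real. \<forall>n t l (w :: nat \<Rightarrow> bool list) D (A :: 'a adv).
     3 * t + 1 \<le> n \<and> 1 \<le> l \<and> D \<subseteq> {1..n} \<and> card D \<le> t \<and>
     (\<forall>i\<in>{1..n} - D. length (w i) = l) \<longrightarrow>
       (\<forall>i\<in>{1..n} - D. \<forall>j\<in>{1..n} - D.
          cool_out F C0 BA n t l w D A i = cool_out F C0 BA n t l w D A j) \<and>
       (\<forall>m. (\<forall>i\<in>{1..n} - D. w i = m) \<longrightarrow>
          (\<forall>i\<in>{1..n} - D. cool_out F C0 BA n t l w D A i = Some m)) \<and>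
       real (cool_rounds F C0 BA n t l w D A) \<le> C * max 1 (real t) \<and>
       real (cool_bits F C0 BA n t l w D A)
         \<le> C * max (real n * real l) (real n * real t * log 2 (real t))"
proof -
  from cool_complexity[OF BA less_imp_le[OF C0]] obtain C where complexity:
    "\<forall>n t l (w :: nat \<Rightarrow> bool list) D (A :: 'a adv).
      3 * t + 1 \<le> n \<and> 1 \<le> l \<and> D \<subseteq> {1..n} \<and> card D \<le> t \<longrightarrow>
        real (cool_rounds F C0 BA n t l w D A) \<le> C * max 1 (real t) \<and>
        real (cool_bits F C0 BA n t l w D A)
          \<le> C * max (real n * real l) (real n * real t * log 2 (real t))" ..
  have fields: "\<And>c. 1 \<le> c \<Longrightarrow> field (F c) \<and> carrier (F c) = {..<2 ^ c}" using GF by blast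
  show ?thesis
  proof (intro exI[of _ C] allI impI)
    fix n t l :: nat and w :: "nat \<Rightarrow> bool list" and D :: "nat set" and A :: "'a adv"
    assume "3 * t + 1 \<le> n \<and> 1 \<le> l \<and> D \<subseteq> {1..n} \<and> card D \<le> t \<and>
      (\<forall>i\<in>{1..n} - D. length (w i) = l)"
    then have hyps: "3 * t + 1 \<le> n" "1 \<le> l" "D \<subseteq> {1..n}" "card D \<le> t"
      "\<forall>i\<in>{1..n} - D. length (w i) = l" by auto
    show "(\<forall>i\<in>{1..n} - D. \<forall>j\<in>{1..n} - D.
          cool_out F C0 BA n t l w D A i = cool_out F C0 BA n t l w D A j) \<and>
       (\<forall>m. (\<forall>i\<in>{1..n} - D. w i = m) \<longrightarrow>
          (\<forall>i\<in>{1..n} - D. cool_out F C0 BA n t l w D A i = Some m)) \<and>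
       real (cool_rounds F C0 BA n t l w D A) \<le> C * max 1 (real t) \<and>
       real (cool_bits F C0 BA n t l w D A)
         \<le> C * max (real n * real l) (real n * real t * log 2 (real t))"
      using cool_correct[OF fields BA hyps] complexity hyps by blast
  qed
qed

end
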